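(* Let $K$ be a number field and $C$ the correspondence $g(y)=f(x)$ with $f,g\in K[z]$, $\deg f=d>\deg g=e\ge1$. Let $P$ be a path of $C$ with entries in $\overline{K}$. Then $v\mapsto G_C(P,v)$ is a measurable function on $M_{\overline{K}}$, the limit $\hat h_C(P)=\lim_{n\to\infty}(e/d)^nh(\pi(\sigma^n(P)))$ exists, and \[\hat h_C(P)=\int_{M_{\overline{K}}}G_C(P,v)\,d\mu(v).\]
   Context: $C=\{(a,b)\in\overline{K}^2:g(b)=f(a)\}$. A path is $P=(x_n)_{n\ge0}$ with $(x_n,x_{n+1})\in C$; $\pi(P)=x_0$, $\sigma(P)=(x_{n+1})_n$. $G_C(P,v)=\lim_n(e/d)^n\log^+|\pi(\sigma^nP)|_v$. $h$ is the absolute logarithmic Weil height. $M_{\overline{K}}$ is the set of absolute values on $\overline{K}$ extending the (normalized) places of $K$, equipped with a $\sigma$-algebra and measure $\mu$ such that for every finite extension $L/K$ and place $w$ of $L$ the set of $v$ restricting to $w$ is measurable with measure $[L_w:K_w]/[L:K]$, and $h(\alpha)=\int\log^+|\alpha|_v\,d\mu(v)$ for all $\alpha\in\overline{K}$. *)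

theory Defs
  imports "HOL-Analysis.Analysis" "HOL-Computational_Algebra.Computational_Algebra"
    "HOL-Library.FuncSet"
begin

text \<open>Model: the algebraic closure of Q is realised as the set of algebraic complex
numbers; a number field K is a subfield of it of finite dimension over Q.\<close>

definition alg :: "complex set" where
  "alg = {z. algebraic z}"

definition subfield :: "complex set \<Rightarrow> bool" where
  "subfield S \<longleftrightarrow> 0 \<in> S \<and> 1 \<in> S \<and> (\<forall>x\<in>S. \<forall>y\<in>S. x + y \<in> S \<and> x * y \<in> S)
     \<and> (\<forall>x\<in>S. - x \<in> S \<and> inverse x \<in> S)"

definition number_field :: "complex set \<Rightarrow> bool" where
  "number_field K \<longleftrightarrow> subfield K \<and> K \<subseteq> alg \<and>
     (\<exists>B. finite B \<and> B \<subseteq> K \<and> K \<subseteq> {\<Sum>b\<in>B. of_rat (c b) * b | c. True})"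

text \<open>Field embeddings of L into the algebraic closure (extensional: 0 outside L);
their number is the absolute degree [L:Q].\<close>

definition emb :: "complex set \<Rightarrow> (complex \<Rightarrow> complex) set" where
  "emb L = {\<tau>. \<tau> 1 = 1 \<and> (\<forall>x\<in>L. \<forall>y\<in>L. \<tau> (x + y) = \<tau> x + \<tau> y \<and> \<tau> (x * y) = \<tau> x * \<tau> y)
              \<and> (\<forall>x. x \<notin> L \<longrightarrow> \<tau> x = 0)}"

definition deg :: "complex set \<Rightarrow> nat" where
  "deg L = card (emb L)"

text \<open>Standard absolute values of Q: p = 0 is the archimedean one, p prime the p-adic one
with |p|_p = 1/p.\<close>

definition absval_Q :: "nat \<Rightarrow> rat \<Rightarrow> real" where
  "absval_Q p q = (if p = 0 then \<bar>real_of_rat q\<bar> else if q = 0 then 0 else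
     (case quotient_of q of (a, b) \<Rightarrow>
        real p powr (real (multiplicity (int p) b) - real (multiplicity (int p) a))))"

definition std_absval :: "(complex \<Rightarrow> real) \<Rightarrow> bool" where
  "std_absval \<phi> \<longleftrightarrow>
     (\<forall>x\<in>alg. 0 \<le> \<phi> x \<and> (\<phi> x = 0 \<longleftrightarrow> x = 0)) \<and>
     (\<forall>x\<in>alg. \<forall>y\<in>alg. \<phi> (x * y) = \<phi> x * \<phi> y \<and> \<phi> (x + y) \<le> \<phi> x + \<phi> y) \<and>
     (\<forall>x. x \<notin> alg \<longrightarrow> \<phi> x = 0) \<and>
     (\<exists>p. (p = 0 \<or> prime p) \<and> (\<forall>q. \<phi> (of_rat q) = absval_Q p q))"

text \<open>Local degree [L_w : Q_p] of the place w of L induced by phi: the number of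
embeddings tau of L with phi o tau = phi on L.\<close>

definition ldeg :: "complex set \<Rightarrow> (complex \<Rightarrow> real) \<Rightarrow> nat" where
  "ldeg L \<phi> = card {\<tau> \<in> emb L. \<forall>x\<in>L. \<phi> (\<tau> x) = \<phi> x}"

definition norm_av :: "complex set \<Rightarrow> (complex \<Rightarrow> real) \<Rightarrow> complex \<Rightarrow> real" where
  "norm_av K \<phi> = (\<lambda>x. \<phi> x powr (real (ldeg K \<phi>) / real (deg K)))"

definition MKbar :: "complex set \<Rightarrow> (complex \<Rightarrow> real) set" where
  "MKbar K = norm_av K ` {\<phi>. std_absval \<phi>}"

definition logplus :: "real \<Rightarrow> real" where
  "logplus x = (if x \<le> 1 then 0 else ln x)"

definition gen_field :: "complex \<Rightarrow> complex set" where
  "gen_field \<alpha> = \<Inter>{S. subfield S \<and> \<alpha> \<in> S}"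

definition places :: "complex set \<Rightarrow> (complex \<Rightarrow> real) set" where
  "places L = (\<lambda>\<phi>. restrict \<phi> L) ` {\<phi>. std_absval \<phi>}"

definition place_ldeg :: "complex set \<Rightarrow> (complex \<Rightarrow> real) \<Rightarrow> nat" where
  "place_ldeg L w = ldeg L (SOME \<phi>. std_absval \<phi> \<and> restrict \<phi> L = w)"

definition weil_height :: "complex \<Rightarrow> real" where
  "weil_height \<alpha> = (let L = gen_field \<alpha> in
     (\<Sum>\<^sub>\<infinity>w\<in>places L. real (place_ldeg L w) * logplus (w \<alpha>)) / real (deg L))"

text \<open>Paths of the correspondence C : g(y) = f(x), i.e. g(x_{n+1}) = f(x_n);
pi (sigma^n P) = P n.\<close>

definition is_path :: "complex poly \<Rightarrow> complex poly \<Rightarrow> (nat \<Rightarrow> complex) \<Rightarrow> bool" where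
  "is_path f g P \<longleftrightarrow> (\<forall>n. poly g (P (Suc n)) = poly f (P n))"

definition shift :: "(nat \<Rightarrow> complex) \<Rightarrow> nat \<Rightarrow> complex" where
  "shift P = (\<lambda>n. P (Suc n))"

definition path_proj :: "(nat \<Rightarrow> complex) \<Rightarrow> complex" where
  "path_proj P = P 0"

definition GC :: "complex poly \<Rightarrow> complex poly \<Rightarrow> (nat \<Rightarrow> complex) \<Rightarrow> (complex \<Rightarrow> real) \<Rightarrow> real" where
  "GC f g P v = lim (\<lambda>n. (real (degree g) / real (degree f)) ^ n
                          * logplus (v (path_proj ((shift ^^ n) P))))"

end

theory Submission
  imports Defs
begin

text \<open>
  For each place \<open>v\<close>, the relation \<open>g(x\<^sub>n\<^sub>+\<^sub>1) = f(x\<^sub>n)\<close> and elementary size estimates for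
  polynomials give \<open>|d log\<^sup>+|x\<^sub>n|\<^sub>v - e log\<^sup>+|x\<^sub>n\<^sub>+\<^sub>1|\<^sub>v| \<le> C\<^sub>v\<close>, where \<open>C\<^sub>v\<close> is built from
  \<open>log\<^sup>+\<close> of the coefficients of \<open>f\<close> and \<open>g\<close> and is therefore integrable.  Hence
  \<open>(e/d)\<^sup>n log\<^sup>+|x\<^sub>n|\<^sub>v\<close> has geometrically decreasing increments, converges to \<open>G\<^sub>C(P,v)\<close> and is
  dominated by an integrable function; integrating with \<open>h(\<alpha>) = \<integral> log\<^sup>+|\<alpha>|\<^sub>v d\<mu>\<close> and applying
  dominated convergence gives the formula for the canonical height.

  Measurability of \<open>v \<mapsto> |\<alpha>|\<^sub>v\<close> holds because it is constant on the fibres of restriction to a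
  number field \<open>L \<ni> \<alpha>\<close>.  These fibres are measurable with measure at least \<open>1/[L:\<rat>]\<close>, and above
  a fixed rational prime some rational number has absolute value \<open>> 1\<close> on all of them, so
  finiteness of its height leaves only finitely many; hence there are countably many fibres.
\<close>

section \<open>Subfields and number fields\<close>

interpretation rat_vs: vector_space "\<lambda>(q::rat) (x::complex). of_rat q * x"
  by unfold_locales (auto simp: algebra_simps of_rat_add of_rat_mult)

lemma subfield_0: "subfield L \<Longrightarrow> 0 \<in> L"
  and subfield_1: "subfield L \<Longrightarrow> 1 \<in> L"
  and subfield_add: "subfield L \<Longrightarrow> x \<in> L \<Longrightarrow> y \<in> L \<Longrightarrow> x + y \<in> L"
  and subfield_mult: "subfield L \<Longrightarrow> x \<in> L \<Longrightarrow> y \<in> L \<Longrightarrow> x * y \<in> L"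
  and subfield_uminus: "subfield L \<Longrightarrow> x \<in> L \<Longrightarrow> - x \<in> L"
  and subfield_inverse: "subfield L \<Longrightarrow> x \<in> L \<Longrightarrow> inverse x \<in> L"
  by (auto simp: subfield_def)

lemma subfield_divide: "subfield L \<Longrightarrow> x \<in> L \<Longrightarrow> y \<in> L \<Longrightarrow> x / y \<in> L"
  by (simp add: divide_inverse subfield_mult subfield_inverse)

lemma subfield_of_nat: "subfield L \<Longrightarrow> of_nat n \<in> L"
  by (induction n) (auto intro: subfield_0 subfield_1 subfield_add)

lemma subfield_of_int: "subfield L \<Longrightarrow> of_int n \<in> L"
  using subfield_of_nat[of L "nat n"] subfield_uminus[OF _ subfield_of_nat, of L "nat (- n)"]
  by (cases "n \<ge> 0") auto

lemma subfield_Ints: "subfield L \<Longrightarrow> x \<in> \<int> \<Longrightarrow> x \<in> L"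
  by (auto elim: Ints_cases intro: subfield_of_int)

lemma subfield_of_rat:
  assumes "subfield L"
  shows "of_rat q \<in> L"
proof -
  obtain a b where "quotient_of q = (a, b)" by (cases "quotient_of q")
  then have "of_rat q = (of_int a / of_int b :: complex)"
    by (metis quotient_of_div of_rat_divide of_rat_of_int_eq)
  then show ?thesis using assms by (simp add: subfield_divide subfield_of_int)
qed

lemma subfield_power: "subfield L \<Longrightarrow> x \<in> L \<Longrightarrow> x ^ n \<in> L"
  by (induction n) (auto intro: subfield_1 subfield_mult)

lemma subfield_sum: "subfield L \<Longrightarrow> (\<And>i. i \<in> I \<Longrightarrow> f i \<in> L) \<Longrightarrow> sum f I \<in> L"
  by (induction I rule: infinite_finite_induct) (auto intro: subfield_0 subfield_add)

lemma subfield_poly: "subfield L \<Longrightarrow> (\<And>i. coeff p i \<in> L) \<Longrightarrow> x \<in> L \<Longrightarrow> poly p x \<in> L"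
  unfolding poly_altdef by (intro subfield_sum) (auto intro: subfield_mult subfield_power)

lemma subfield_subspace: "subfield L \<Longrightarrow> rat_vs.subspace L"
  by (auto simp: rat_vs.subspace_def intro: subfield_0 subfield_add subfield_mult subfield_of_rat)

lemma number_field_span:
  assumes "number_field K"
  obtains B where "finite B" "B \<subseteq> K" "K = rat_vs.span B"
proof -
  from assms obtain B where B: "finite B" "B \<subseteq> K" "K \<subseteq> {\<Sum>b\<in>B. of_rat (c b) * b | c. True}"
    unfolding number_field_def by blast
  have "K \<subseteq> rat_vs.span B" using B by (auto simp: rat_vs.span_finite)
  moreover have "rat_vs.span B \<subseteq> K"
    using assms B(2) by (intro rat_vs.span_minimal subfield_subspace) (auto simp: number_field_def)
  ultimately show ?thesis using that B by blast
qed

lemma span_times_mem: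
  assumes "\<And>b. b \<in> B \<Longrightarrow> b * c \<in> rat_vs.span S" and "y \<in> rat_vs.span B"
  shows "y * c \<in> rat_vs.span S"
proof -
  have "rat_vs.subspace {y. y * c \<in> rat_vs.span S}"
    unfolding rat_vs.subspace_def
    by (auto simp: distrib_right mult.assoc intro: rat_vs.span_zero rat_vs.span_add rat_vs.span_scale)
  then show ?thesis using rat_vs.span_induct[OF assms(2)] assms(1) by blast
qed

lemma span_mult_closed:
  assumes "\<And>s t. s \<in> S \<Longrightarrow> t \<in> S \<Longrightarrow> s * t \<in> rat_vs.span S"
    and "x \<in> rat_vs.span S" "y \<in> rat_vs.span S"
  shows "x * y \<in> rat_vs.span S"
proof (rule span_times_mem[OF _ assms(2)])
  fix s assume "s \<in> S"
  then show "s * y \<in> rat_vs.span S"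
    using span_times_mem[of S s S y] assms(1,3) by (simp add: mult.commute)
qed

text \<open>In a finite-dimensional \<open>\<rat>\<close>-algebra the powers of an element are linearly dependent,
  so every element is algebraic, and its inverse is a polynomial in it.\<close>

locale rat_span_algebra =
  fixes S :: "complex set"
  assumes finite: "finite S" and one: "1 \<in> rat_vs.span S"
    and mult: "\<And>x y. x \<in> rat_vs.span S \<Longrightarrow> y \<in> rat_vs.span S \<Longrightarrow> x * y \<in> rat_vs.span S"
begin

lemma power: "x \<in> rat_vs.span S \<Longrightarrow> x ^ i \<in> rat_vs.span S"
  by (induction i) (auto intro: one mult)

lemma int_poly: "x \<in> rat_vs.span S \<Longrightarrow> poly (map_poly of_int q) x \<in> rat_vs.span S"
  unfolding poly_altdef
  by (auto simp: coeff_map_poly intro!: rat_vs.span_sum power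
      rat_vs.span_scale[where c = "of_int _", simplified])

lemma algebraic:
  assumes x: "x \<in> rat_vs.span S"
  shows "algebraic x"
proof (cases "inj_on (\<lambda>i. x ^ i) {..card S}")
  case True
  define T where "T = (\<lambda>i. x ^ i) ` {..card S}"
  have "card T = Suc (card S)" using True by (simp add: T_def card_image)
  moreover have "T \<subseteq> rat_vs.span S" using power[OF x] by (auto simp: T_def)
  ultimately have "\<not> rat_vs.independent T"
    using rat_vs.independent_span_bound[OF finite] by fastforce
  then obtain u where u: "\<exists>v\<in>T. u v \<noteq> 0" "(\<Sum>v\<in>T. of_rat (u v) * v) = 0"
    using rat_vs.dependent_finite[of T] by (auto simp: T_def)
  define p :: "complex poly" where "p = (\<Sum>i\<le>card S. monom (of_rat (u (x ^ i))) i)"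
  have coeff_p: "coeff p j = (if j \<le> card S then of_rat (u (x ^ j)) else 0)" for j
    by (simp add: p_def coeff_sum coeff_monom)
  have "poly p x = (\<Sum>v\<in>T. of_rat (u v) * v)"
    unfolding T_def p_def by (simp add: sum.reindex[OF True] poly_sum poly_monom)
  moreover have "p \<noteq> 0"
    using u(1) coeff_p by (auto simp: T_def poly_eq_iff)
  ultimately show ?thesis using u(2) coeff_p by (intro algebraicI'[of p]) auto
next
  case False
  then obtain i j where ij: "i \<noteq> j" "x ^ i = x ^ j"
    unfolding inj_on_def by auto
  define p :: "complex poly" where "p = monom 1 i - monom 1 j"
  have "coeff p i = 1" using ij by (simp add: p_def coeff_monom)
  then have "p \<noteq> 0" by auto
  then show ?thesis using ij by (intro algebraicI'[of p]) (auto simp: p_def coeff_monom poly_monom)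
qed

lemma inverse:
  assumes x: "x \<in> rat_vs.span S"
  shows "inverse x \<in> rat_vs.span S"
proof (cases "x = 0")
  case True then show ?thesis by (simp add: rat_vs.span_zero)
next
  case False
  obtain p where p: "coeff p 0 \<noteq> 0" "poly (map_poly of_int p) x = 0"
    using algebraicE'_nonzero[OF algebraic[OF x] False] by blast
  obtain c q where pq: "p = pCons c q" by (cases p)
  have c: "c \<noteq> 0" using p(1) pq by simp
  have "of_int c + x * poly (map_poly of_int q) x = 0"
    using p(2) by (simp add: pq map_poly_pCons)
  then have "poly (map_poly of_int q) x = - of_int c * inverse x"
    using False by (simp add: add_eq_0_iff field_simps)
  then have "inverse x = of_rat (- 1 / of_int c) * poly (map_poly of_int q) x"
    using c by (simp add: of_rat_divide)
  also have "\<dots> \<in> rat_vs.span S" by (intro rat_vs.span_scale int_poly x)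
  finally show ?thesis .
qed

lemma number_field: "number_field (rat_vs.span S)"
proof -
  have "subfield (rat_vs.span S)"
    unfolding subfield_def using one mult inverse
    by (simp add: rat_vs.span_zero rat_vs.span_add rat_vs.span_neg)
  moreover have "rat_vs.span S \<subseteq> alg" using algebraic by (auto simp: alg_def)
  moreover have "rat_vs.span S \<subseteq> {\<Sum>b\<in>S. of_rat (c b) * b | c. True}"
    using rat_vs.span_finite[OF finite] by auto
  ultimately show ?thesis
    unfolding number_field_def using finite rat_vs.span_superset[of S] by blast
qed

end

lemma power_degree_root:
  fixes P :: "'a::field poly"
  assumes "P \<noteq> 0" "poly P \<alpha> = 0"
  shows "\<alpha> ^ degree P = (\<Sum>i<degree P. - (coeff P i / lead_coeff P) * \<alpha> ^ i)"
proof -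
  have "(\<Sum>i<degree P. coeff P i * \<alpha> ^ i) + lead_coeff P * \<alpha> ^ degree P = 0"
    using assms(2) by (simp add: poly_altdef lessThan_Suc_atMost[symmetric])
  then have "lead_coeff P * \<alpha> ^ degree P = - (\<Sum>i<degree P. coeff P i * \<alpha> ^ i)"
    by (simp add: add_eq_0_iff)
  then have "\<alpha> ^ degree P = - (\<Sum>i<degree P. coeff P i * \<alpha> ^ i) / lead_coeff P"
    using assms(1) by (metis leading_coeff_0_iff nonzero_mult_div_cancel_left)
  then show ?thesis by (simp add: sum_negf sum_divide_distrib)
qed

lemma times_power_mem_span:
  assumes K: "subfield K" "K \<subseteq> rat_vs.span B"
    and P: "P \<noteq> 0" "\<And>i. coeff P i \<in> K" "poly P \<alpha> = 0"
    and y: "y \<in> K"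
  shows "y * \<alpha> ^ k \<in> rat_vs.span ((\<lambda>(b, i). b * \<alpha> ^ i) ` (B \<times> {..<degree P}))"
  using y
proof (induction k arbitrary: y rule: less_induct)
  case (less k)
  define m where "m = degree P"
  define V where "V = rat_vs.span ((\<lambda>(b, i). b * \<alpha> ^ i) ` (B \<times> {..<m}))"
  show ?case
  proof (cases "k < m")
    case True
    have "b * \<alpha> ^ k \<in> V" if "b \<in> B" for b
      using that True by (auto simp: V_def intro: rat_vs.span_base)
    then show ?thesis using span_times_mem[of B] less.prems K(2) by (auto simp: V_def m_def)
  next
    case False
    have reduce: "\<alpha> ^ m = (\<Sum>i<m. - (coeff P i / coeff P m) * \<alpha> ^ i)"
      using power_degree_root[OF P(1,3)] by (simp add: m_def)
    have "y * \<alpha> ^ k = y * \<alpha> ^ (k - m) * \<alpha> ^ m"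
      using False by (simp flip: power_add mult.assoc)
    also have "\<dots> = (\<Sum>i<m. (y * - (coeff P i / coeff P m)) * \<alpha> ^ (k - m + i))"
      unfolding reduce by (simp add: sum_distrib_left power_add mult_ac)
    also have "\<dots> \<in> V"
      unfolding V_def
    proof (intro rat_vs.span_sum)
      fix i assume "i \<in> {..<m}"
      then have "k - m + i < k" using False by auto
      moreover have "y * - (coeff P i / coeff P m) \<in> K"
        using less.prems K(1) P(2) by (intro subfield_mult subfield_uminus subfield_divide)
      ultimately show "y * - (coeff P i / coeff P m) * \<alpha> ^ (k - m + i)
          \<in> rat_vs.span ((\<lambda>(b, i). b * \<alpha> ^ i) ` (B \<times> {..<m}))"
        unfolding m_def by (rule less.IH)
    qed
    finally show ?thesis by (simp add: V_def m_def)
  qed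
qed

lemma number_field_extend:
  assumes K: "number_field K" and \<alpha>: "\<alpha> \<in> alg"
  obtains L where "number_field L" "K \<subseteq> L" "\<alpha> \<in> L"
proof -
  obtain B where B: "finite B" "B \<subseteq> K" "K = rat_vs.span B" using number_field_span[OF K] .
  have sfK: "subfield K" using K by (simp add: number_field_def)
  have "algebraic \<alpha>" using \<alpha> by (simp add: alg_def)
  then obtain P where P: "\<And>i. coeff P i \<in> \<int>" "P \<noteq> 0" "poly P \<alpha> = 0"
    using algebraicE by blast
  have PK: "coeff P i \<in> K" for i using P(1) subfield_Ints[OF sfK] by blast
  define S where "S = (\<lambda>(b, i). b * \<alpha> ^ i) ` (B \<times> {..<degree P})"
  have mem: "y * \<alpha> ^ k \<in> rat_vs.span S" if "y \<in> K" for y k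
    unfolding S_def using times_power_mem_span[OF sfK _ P(2) PK P(3) that] B(3) by simp
  have "s * t \<in> rat_vs.span S" if "s \<in> S" "t \<in> S" for s t
  proof -
    from that obtain b i b' j where "b \<in> B" "b' \<in> B" "s = b * \<alpha> ^ i" "t = b' * \<alpha> ^ j"
      by (auto simp: S_def)
    then have "s * t = (b * b') * \<alpha> ^ (i + j)" and "b * b' \<in> K"
      using B(2) by (auto simp: power_add mult_ac intro: subfield_mult[OF sfK])
    then show ?thesis using mem by simp
  qed
  then have "x * y \<in> rat_vs.span S" if "x \<in> rat_vs.span S" "y \<in> rat_vs.span S" for x y
    using span_mult_closed that by blast
  moreover have "finite S" using B(1) by (simp add: S_def)
  ultimately interpret rat_span_algebra S
    using mem[of 1 0] subfield_1[OF sfK] by unfold_locales auto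
  show ?thesis
    using that[OF number_field] mem[of _ 0] mem[of 1 1] subfield_1[OF sfK] by auto
qed

lemma number_field_Rats: "number_field \<rat>"
proof -
  have "\<rat> \<subseteq> {\<Sum>b\<in>{1}. of_rat (c b) * b | c. True}"
    by (auto elim!: Rats_cases intro: exI[of _ "\<lambda>_. _"])
  then show ?thesis
    unfolding number_field_def subfield_def alg_def
    by (auto intro!: exI[of _ "{1}"] rat_imp_algebraic)
qed

lemma subfield_alg: "subfield alg"
proof -
  have "x + y \<in> alg \<and> x * y \<in> alg" if "x \<in> alg" "y \<in> alg" for x y
  proof -
    obtain L where L: "number_field L" "x \<in> L"
      using number_field_extend[OF number_field_Rats \<open>x \<in> alg\<close>] by blast
    obtain L' where L': "number_field L'" "L \<subseteq> L'" "y \<in> L'"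
      using number_field_extend[OF L(1) \<open>y \<in> alg\<close>] by blast
    then show ?thesis using L(2) by (auto simp: number_field_def intro: subfield_add subfield_mult)
  qed
  then show ?thesis by (auto simp: subfield_def alg_def)
qed

section \<open>Field embeddings\<close>

context
  fixes L \<tau> assumes L: "subfield L" and \<tau>: "\<tau> \<in> emb L"
begin

lemma emb_add: "x \<in> L \<Longrightarrow> y \<in> L \<Longrightarrow> \<tau> (x + y) = \<tau> x + \<tau> y"
  and emb_mult: "x \<in> L \<Longrightarrow> y \<in> L \<Longrightarrow> \<tau> (x * y) = \<tau> x * \<tau> y"
  and emb_1: "\<tau> 1 = 1"
  and emb_outside: "x \<notin> L \<Longrightarrow> \<tau> x = 0"
  using \<tau> by (auto simp: emb_def)

lemma emb_0: "\<tau> 0 = 0"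
  using emb_add[OF subfield_0[OF L] subfield_0[OF L]] by simp

lemma emb_uminus: "x \<in> L \<Longrightarrow> \<tau> (- x) = - \<tau> x"
  using emb_add[of x "- x"] emb_0 subfield_uminus[OF L] by (simp add: add_eq_0_iff)

lemma emb_of_nat: "\<tau> (of_nat n) = of_nat n"
  by (induction n) (simp_all add: emb_0 emb_1 emb_add subfield_of_nat[OF L] subfield_1[OF L])

lemma emb_of_int: "\<tau> (of_int n) = of_int n"
proof (cases "n \<ge> 0")
  case True then show ?thesis using emb_of_nat[of "nat n"] by simp
next
  case False
  then have "of_int n = - (of_nat (nat (- n)) :: complex)" by simp
  then show ?thesis by (simp only: emb_uminus[OF subfield_of_nat[OF L]] emb_of_nat)
qed

lemma emb_of_rat: "\<tau> (of_rat r) = of_rat r"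
proof -
  obtain a b where ab: "quotient_of r = (a, b)" by (cases "quotient_of r")
  have b: "b > 0" using quotient_of_denom_pos[OF ab] .
  have r: "(of_rat r :: complex) = of_int a / of_int b"
    using quotient_of_div[OF ab] by (simp add: of_rat_divide)
  have "of_int a = (of_rat r :: complex) * of_int b" using b by (simp add: r)
  then have "\<tau> (of_int a) = \<tau> (of_rat r) * \<tau> (of_int b)"
    using emb_mult[OF subfield_of_rat[OF L] subfield_of_int[OF L]] by simp
  then have "of_int a = \<tau> (of_rat r) * of_int b" by (simp add: emb_of_int)
  then show ?thesis using b by (simp add: r field_simps)
qed

lemma emb_sum: "(\<And>i. i \<in> I \<Longrightarrow> f i \<in> L) \<Longrightarrow> \<tau> (sum f I) = (\<Sum>i\<in>I. \<tau> (f i))"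
  by (induction I rule: infinite_finite_induct) (auto simp: emb_0 emb_add subfield_sum[OF L])

lemma emb_poly_Ints:
  "(\<And>i. coeff p i \<in> \<int>) \<Longrightarrow> x \<in> L \<Longrightarrow> \<tau> (poly p x) = poly p (\<tau> x)"
proof (induction p)
  case (pCons a p)
  have "a \<in> L" and "\<And>i. coeff p i \<in> \<int>"
    using pCons.prems(1)[of 0] pCons.prems(1)[of "Suc _"] subfield_Ints[OF L] by auto
  moreover from this have "poly p x \<in> L"
    using pCons.prems(2) subfield_Ints[OF L] by (intro subfield_poly[OF L]) auto
  moreover have "\<tau> a = a"
    using pCons.prems(1)[of 0] by (auto simp: emb_of_int elim: Ints_cases)
  ultimately show ?case
    using pCons by (simp add: emb_add emb_mult subfield_mult[OF L])
qed (simp add: emb_0)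

lemma emb_rat_lincomb:
  assumes "B \<subseteq> L"
  shows "\<tau> (\<Sum>b\<in>B. of_rat (u b) * b) = (\<Sum>b\<in>B. of_rat (u b) * \<tau> b)"
proof -
  have "b \<in> L" if "b \<in> B" for b using assms that by blast
  then show ?thesis
    by (simp add: emb_sum emb_mult emb_of_rat subfield_mult[OF L] subfield_of_rat[OF L])
qed

end

lemma emb_eq_on_span:
  assumes L: "subfield L" and \<tau>: "\<tau> \<in> emb L" and \<sigma>: "\<sigma> \<in> emb L"
    and B: "finite B" "B \<subseteq> L" "L = rat_vs.span B" and eq: "\<And>b. b \<in> B \<Longrightarrow> \<tau> b = \<sigma> b"
  shows "\<tau> = \<sigma>"
proof
  fix x show "\<tau> x = \<sigma> x"
  proof (cases "x \<in> L")
    case True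
    then obtain u where "x = (\<Sum>b\<in>B. of_rat (u b) * b)"
      using B(3) rat_vs.span_finite[OF B(1)] by auto
    then show ?thesis using emb_rat_lincomb[OF L \<tau> B(2)] emb_rat_lincomb[OF L \<sigma> B(2)] eq by simp
  qed (simp add: emb_outside[OF L \<tau>] emb_outside[OF L \<sigma>])
qed

text \<open>An embedding is determined by its values on a \<open>\<rat>\<close>-basis, and these values are
  roots of fixed nonzero polynomials.\<close>

lemma finite_emb:
  assumes L: "number_field L"
  shows "finite (emb L)"
proof -
  have sfL: "subfield L" and La: "L \<subseteq> alg" using L by (auto simp: number_field_def)
  obtain B where B: "finite B" "B \<subseteq> L" "L = rat_vs.span B" using number_field_span[OF L] .
  have "\<forall>b\<in>B. \<exists>p. (\<forall>i. coeff p i \<in> \<int>) \<and> p \<noteq> 0 \<and> poly p b = 0"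
  proof
    fix b assume "b \<in> B"
    then have "algebraic b" using B(2) La by (auto simp: alg_def)
    then show "\<exists>p. (\<forall>i. coeff p i \<in> \<int>) \<and> p \<noteq> 0 \<and> poly p b = 0"
      by (elim algebraicE) blast
  qed
  from bchoice[OF this] obtain pol
    where pol: "\<forall>b\<in>B. (\<forall>i. coeff (pol b) i \<in> \<int>) \<and> pol b \<noteq> 0 \<and> poly (pol b) b = 0"
    by blast
  define R where "R b = {z. poly (pol b) z = 0}" for b
  have image: "(\<lambda>\<tau>. restrict \<tau> B) ` emb L \<subseteq> PiE B R"
  proof safe
    fix \<tau> b assume \<tau>: "\<tau> \<in> emb L" and b: "b \<in> B"
    then have "\<tau> (poly (pol b) b) = poly (pol b) (\<tau> b)"
      using B(2) pol by (intro emb_poly_Ints[OF sfL \<tau>]) auto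
    then show "restrict \<tau> B b \<in> R b"
      using b pol emb_0[OF sfL \<tau>] by (simp add: R_def)
  qed auto
  have inj: "inj_on (\<lambda>\<tau>. restrict \<tau> B) (emb L)"
    using emb_eq_on_span[OF sfL _ _ B(1,2)] B(3) by (intro inj_onI) (metis restrict_apply')
  have "finite (R b)" if "b \<in> B" for b
    unfolding R_def using pol that by (intro poly_roots_finite) auto
  then show ?thesis using inj_on_finite[OF inj image] finite_PiE[OF B(1)] by blast
qed

lemma ldeg_pos:
  assumes L: "number_field L"
  shows "ldeg L \<phi> \<ge> 1"
proof -
  have "(\<lambda>x. if x \<in> L then x else 0) \<in> {\<tau> \<in> emb L. \<forall>x\<in>L. \<phi> (\<tau> x) = \<phi> x}"
    using L by (auto simp: emb_def number_field_def subfield_1 subfield_add subfield_mult)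
  moreover have "finite {\<tau> \<in> emb L. \<forall>x\<in>L. \<phi> (\<tau> x) = \<phi> x}" using finite_emb[OF L] by simp
  ultimately have "card {\<tau> \<in> emb L. \<forall>x\<in>L. \<phi> (\<tau> x) = \<phi> x} > 0"
    by (subst card_gt_0_iff) blast
  then show ?thesis unfolding ldeg_def by simp
qed

lemma ldeg_le_deg: "number_field L \<Longrightarrow> ldeg L \<phi> \<le> deg L"
  unfolding ldeg_def deg_def by (intro card_mono finite_emb) auto

lemma deg_pos: "number_field L \<Longrightarrow> deg L \<ge> 1"
  using ldeg_pos[of L \<phi>] ldeg_le_deg[of L \<phi>] by simp

section \<open>Absolute values on the algebraic numbers\<close>

lemma logplus_eq: "logplus t = ln (max 1 t)"
  by (simp add: logplus_def max_def)

lemma logplus_nonneg: "logplus t \<ge> 0"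
  by (simp add: logplus_def)

lemma weil_height_nonneg: "weil_height \<alpha> \<ge> 0"
  unfolding weil_height_def Let_def
  by (intro divide_nonneg_nonneg infsum_nonneg mult_nonneg_nonneg logplus_nonneg) auto

lemma logplus_powr:
  assumes "t \<ge> 0" "c \<ge> 0"
  shows "logplus (t powr c) = c * logplus t"
proof (cases "t = 0 \<or> c = 0")
  case False
  then have "t > 0" "c > 0" using assms by auto
  moreover from this have "t powr c \<le> 1 \<longleftrightarrow> t \<le> 1"
    by (metis powr_le_cancel_iff powr_one_eq_one powr_le1 less_eq_real_def not_le
        powr_less_mono2 powr_one_gt_zero_iff)
  ultimately show ?thesis by (simp add: logplus_def ln_powr)
qed (auto simp: logplus_def)

lemma absval_Q_of_nat_le_1:
  assumes "prime p"
  shows "absval_Q p (of_nat n) \<le> 1"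
proof -
  have "1 \<le> real p powr real (multiplicity (int p) (int n))"
    using assms by (intro ge_one_powr_ge_zero) (auto simp: Suc_le_eq prime_gt_0_nat)
  then show ?thesis using assms by (auto simp: absval_Q_def powr_minus inverse_le_1_iff)
qed

lemma absval_Q_gt_1:
  assumes "p = 0 \<or> prime p"
  obtains q where "absval_Q p q > 1"
proof (cases "p = 0")
  case True
  then show ?thesis using that[of 2] by (simp add: absval_Q_def)
next
  case False
  with assms have "prime p" by simp
  then have "multiplicity (int p) (int p) = 1"
    by (intro multiplicity_self) (auto simp: prime_gt_1_nat)
  moreover have "quotient_of (inverse (of_nat p)) = (1, int p)"
    using quotient_of_rat_of_int[of "int p"] False by (simp add: rat_inverse_code)
  ultimately have "absval_Q p (inverse (of_nat p)) = real p"
    using False by (simp add: absval_Q_def)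
  then show ?thesis using that[of "inverse (of_nat p)"] prime_gt_1_nat[OF \<open>prime p\<close>] by simp
qed

locale std_place =
  fixes \<phi> :: "complex \<Rightarrow> real"
  assumes std: "std_absval \<phi>"
begin

lemma nonneg: "\<phi> x \<ge> 0"
  using std unfolding std_absval_def by (cases "x \<in> alg") auto

lemma mult: "x \<in> alg \<Longrightarrow> y \<in> alg \<Longrightarrow> \<phi> (x * y) = \<phi> x * \<phi> y"
  and triangle: "x \<in> alg \<Longrightarrow> y \<in> alg \<Longrightarrow> \<phi> (x + y) \<le> \<phi> x + \<phi> y"
  and zero_iff: "x \<in> alg \<Longrightarrow> \<phi> x = 0 \<longleftrightarrow> x = 0"
  using std unfolding std_absval_def by blast+

lemma restrict_to_rat:
  obtains p where "p = 0 \<or> prime p" "\<And>q. \<phi> (of_rat q) = absval_Q p q"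
  using std unfolding std_absval_def by blast

lemma zero: "\<phi> 0 = 0"
  using zero_iff subfield_0[OF subfield_alg] by simp

lemma one: "\<phi> 1 = 1"
proof -
  obtain p where "p = 0 \<or> prime p" "\<phi> (of_rat 1) = absval_Q p 1"
    using restrict_to_rat by metis
  then show ?thesis by (auto simp: absval_Q_def)
qed

lemma power: "x \<in> alg \<Longrightarrow> \<phi> (x ^ n) = \<phi> x ^ n"
  by (induction n) (simp_all add: one mult subfield_power[OF subfield_alg])

lemma inverse: "x \<in> alg \<Longrightarrow> \<phi> (inverse x) = inverse (\<phi> x)"
  using mult[of x "inverse x"] subfield_inverse[OF subfield_alg] one zero
  by (cases "x = 0") (auto intro: inverse_unique[symmetric])

lemma uminus:
  assumes "x \<in> alg"
  shows "\<phi> (- x) = \<phi> x"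
proof -
  have m1: "- 1 \<in> alg" using subfield_uminus[OF subfield_alg subfield_1[OF subfield_alg]] .
  then have "\<phi> (- 1) * \<phi> (- 1) = 1" using mult[OF m1 m1] one by simp
  then have "\<phi> (- 1) = 1" using nonneg[of "- 1"] by (metis abs_of_nonneg abs_square_eq_1 power2_eq_square)
  then show ?thesis using mult[OF m1 assms] by simp
qed

lemma sum_le: "(\<And>i. i \<in> I \<Longrightarrow> f i \<in> alg) \<Longrightarrow> \<phi> (sum f I) \<le> (\<Sum>i\<in>I. \<phi> (f i))"
proof (induction I rule: infinite_finite_induct)
  case (insert i I)
  then have "\<phi> (sum f (insert i I)) \<le> \<phi> (f i) + \<phi> (sum f I)"
    by (simp add: triangle subfield_sum[OF subfield_alg])
  then show ?case using insert by simp
qed (simp_all add: zero)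

text \<open>At a finite place the binomial expansion gives \<open>\<phi>(x + y)\<^sup>N \<le> (N + 1) max (\<phi> x) (\<phi> y)\<^sup>N\<close>,
  since integers have absolute value at most 1; letting \<open>N \<rightarrow> \<infinity>\<close> yields the ultrametric
  inequality.\<close>

lemma ultrametric:
  assumes p: "prime p" "\<And>q. \<phi> (of_rat q) = absval_Q p q"
    and x: "x \<in> alg" and y: "y \<in> alg"
  shows "\<phi> (x + y) \<le> max (\<phi> x) (\<phi> y)"
proof (rule ccontr)
  define M where "M = max (\<phi> x) (\<phi> y)"
  define t where "t = \<phi> (x + y)"
  assume "\<not> \<phi> (x + y) \<le> max (\<phi> x) (\<phi> y)"
  then have tM: "t > M" and M0: "M \<ge> 0" by (auto simp: M_def t_def le_max_iff_disj nonneg)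
  have binomial_bound: "t ^ N \<le> real (Suc N) * M ^ N" for N
  proof -
    have mem: "of_nat (N choose k) * x ^ k * y ^ (N - k) \<in> alg" for k
      using subfield_alg x y by (intro subfield_mult subfield_of_nat subfield_power)
    have "\<phi> (of_nat (N choose k) * x ^ k * y ^ (N - k)) \<le> M ^ N" if "k \<le> N" for k
    proof -
      have "\<phi> (of_nat (N choose k)) \<le> 1"
        using p(2)[of "of_nat (N choose k)"] absval_Q_of_nat_le_1[OF p(1)] by simp
      then have "\<phi> (of_nat (N choose k)) * \<phi> x ^ k * \<phi> y ^ (N - k) \<le> 1 * M ^ k * M ^ (N - k)"
        by (intro mult_mono power_mono) (auto simp: M_def nonneg le_max_iff_disj)
      then show ?thesis using that x y subfield_alg
        by (simp add: mult power subfield_mult subfield_of_nat subfield_power flip: power_add)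
    qed
    then have "(\<Sum>k\<le>N. \<phi> (of_nat (N choose k) * x ^ k * y ^ (N - k))) \<le> (\<Sum>k\<le>N. M ^ N)"
      by (intro sum_mono) simp
    then have "\<phi> (\<Sum>k\<le>N. of_nat (N choose k) * x ^ k * y ^ (N - k)) \<le> (\<Sum>k\<le>N. M ^ N)"
      by (rule order_trans[OF sum_le[OF mem]])
    moreover have "t ^ N = \<phi> ((x + y) ^ N)"
      by (simp add: t_def power subfield_add[OF subfield_alg x y])
    ultimately show ?thesis by (simp add: binomial_ring)
  qed
  define q where "q = M / t"
  have q: "q \<ge> 0" "q < 1" using tM M0 by (auto simp: q_def field_simps)
  have "1 \<le> real N * q ^ N + q ^ N" for N
    using binomial_bound[of N] tM M0
    by (simp add: q_def power_divide field_simps)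
  moreover have "(\<lambda>N. real N * q ^ N + q ^ N) \<longlonglongrightarrow> 0 + 0"
    using q by (intro tendsto_add powser_times_n_limit_0 LIMSEQ_power_zero) auto
  ultimately have "1 \<le> (0::real)" by (intro LIMSEQ_le_const[of _ 0]) auto
  then show False by simp
qed

lemma sum_bound:
  assumes f: "\<And>i. i \<in> I \<Longrightarrow> f i \<in> alg" and B: "\<And>i. i \<in> I \<Longrightarrow> \<phi> (f i) \<le> B" and "B \<ge> 0"
  shows "\<phi> (sum f I) \<le> max 1 (\<phi> (of_nat (card I))) * B"
proof -
  obtain p where p: "p = 0 \<or> prime p" "\<And>q. \<phi> (of_rat q) = absval_Q p q"
    using restrict_to_rat by metis
  show ?thesis
  proof (cases "p = 0")
    case True
    have "\<phi> (sum f I) \<le> (\<Sum>i\<in>I. \<phi> (f i))" using sum_le f by blast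
    also have "\<dots> \<le> real (card I) * B" using B sum_mono[of I _ "\<lambda>_. B"] by fastforce
    also have "\<dots> \<le> max 1 (real (card I)) * B" using \<open>B \<ge> 0\<close> by (intro mult_right_mono) auto
    finally show ?thesis using p(2)[of "of_nat (card I)"] True by (simp add: absval_Q_def)
  next
    case False
    with p have "prime p" by simp
    have "\<phi> (sum f I) \<le> B" using f B
    proof (induction I rule: infinite_finite_induct)
      case (insert i I)
      then have "\<phi> (f i + sum f I) \<le> max (\<phi> (f i)) (\<phi> (sum f I))"
        by (intro ultrametric[OF \<open>prime p\<close> p(2)] subfield_sum[OF subfield_alg]) auto
      moreover have "\<phi> (f i) \<le> B" "\<phi> (sum f I) \<le> B" using insert by auto
      ultimately show ?case using insert.hyps by simp
    qed (use \<open>B \<ge> 0\<close> in \<open>simp_all add: zero\<close>)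
    moreover have "1 * B \<le> max 1 (\<phi> (of_nat (card I))) * B"
      using \<open>B \<ge> 0\<close> by (intro mult_right_mono) auto
    ultimately show ?thesis by simp
  qed
qed

end

section \<open>Size estimates for polynomials\<close>

definition coeff_size :: "(complex \<Rightarrow> real) \<Rightarrow> complex poly \<Rightarrow> real" where
  "coeff_size \<phi> p = max 1 (\<phi> (of_nat (Suc (degree p)))) * (\<Prod>i\<le>degree p. max 1 (\<phi> (coeff p i)))
     * max 1 (\<phi> (inverse (lead_coeff p)))"

definition log_coeff_size :: "(complex \<Rightarrow> real) \<Rightarrow> complex poly \<Rightarrow> real" where
  "log_coeff_size \<phi> p = logplus (\<phi> (of_nat (Suc (degree p))))
     + (\<Sum>i\<le>degree p. logplus (\<phi> (coeff p i))) + logplus (\<phi> (inverse (lead_coeff p)))"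

lemma coeff_size_ge_1: "coeff_size \<phi> p \<ge> 1"
proof -
  have "(\<Prod>i\<le>degree p. max 1 (\<phi> (coeff p i))) \<ge> 1" by (intro prod_ge_1) auto
  then have "1 * 1 * 1 \<le> coeff_size \<phi> p"
    unfolding coeff_size_def by (intro mult_mono) auto
  then show ?thesis by simp
qed

lemma ln_coeff_size: "ln (coeff_size \<phi> p) = log_coeff_size \<phi> p"
proof -
  have "(\<Prod>i\<le>degree p. max 1 (\<phi> (coeff p i))) > 0" by (intro prod_pos) auto
  moreover have "max 1 t \<noteq> 0" for t :: real by (simp add: max_def)
  ultimately show ?thesis
    unfolding coeff_size_def log_coeff_size_def logplus_eq by (simp add: ln_mult ln_prod)
qed

lemma log_coeff_size_nonneg: "log_coeff_size \<phi> p \<ge> 0"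
  unfolding log_coeff_size_def by (intro add_nonneg_nonneg sum_nonneg logplus_nonneg)

lemma log_coeff_size_powr:
  assumes "\<And>x. \<phi> x \<ge> 0" "c \<ge> 0"
  shows "log_coeff_size (\<lambda>x. \<phi> x powr c) p = c * log_coeff_size \<phi> p"
  unfolding log_coeff_size_def using assms by (simp add: logplus_powr distrib_left sum_distrib_left)

context std_place
begin

lemma coeff_term_bound:
  assumes "coeff p i \<in> alg" "x \<in> alg" "i \<le> j" "i \<le> degree p"
  shows "\<phi> (coeff p i * x ^ i) \<le> (\<Prod>i\<le>degree p. max 1 (\<phi> (coeff p i))) * max 1 (\<phi> x) ^ j"
proof -
  have "\<phi> (coeff p i) \<le> max 1 (\<phi> (coeff p i))" by simp
  also have "\<dots> \<le> (\<Prod>i\<le>degree p. max 1 (\<phi> (coeff p i)))"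
    using prod_mono2[of "{..degree p}" "{i}" "\<lambda>i. max 1 (\<phi> (coeff p i))"] assms(4)
    by (simp del: max.bounded_iff)
  finally have "\<phi> (coeff p i) \<le> (\<Prod>i\<le>degree p. max 1 (\<phi> (coeff p i)))" .
  moreover have "\<phi> x ^ i \<le> max 1 (\<phi> x) ^ j"
    using assms(3) by (meson max.cobounded1 max.cobounded2 nonneg order_trans power_increasing
        power_mono)
  ultimately have "\<phi> (coeff p i) * \<phi> x ^ i
      \<le> (\<Prod>i\<le>degree p. max 1 (\<phi> (coeff p i))) * max 1 (\<phi> x) ^ j"
    by (intro mult_mono) (auto simp: nonneg prod_nonneg)
  then show ?thesis using assms(1,2) by (simp add: mult power subfield_power[OF subfield_alg])
qed

lemma poly_upper_bound:
  assumes p: "\<And>i. coeff p i \<in> alg" and x: "x \<in> alg"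
  shows "max 1 (\<phi> (poly p x)) \<le> coeff_size \<phi> p * max 1 (\<phi> x) ^ degree p"
proof -
  define m where "m = degree p"
  define A where "A = (\<Prod>i\<le>m. max 1 (\<phi> (coeff p i)))"
  define X where "X = max 1 (\<phi> x)"
  have "A \<ge> 1" unfolding A_def by (intro prod_ge_1) auto
  have "X \<ge> 1" by (simp add: X_def)
  have terms: "coeff p i * x ^ i \<in> alg" for i
    using p x subfield_alg by (intro subfield_mult subfield_power)
  have "\<phi> (poly p x) = \<phi> (\<Sum>i\<le>m. coeff p i * x ^ i)" by (simp add: poly_altdef m_def)
  also have "\<dots> \<le> max 1 (\<phi> (of_nat (card {..m}))) * (A * X ^ m)"
  proof (rule sum_bound[OF terms])
    show "\<phi> (coeff p i * x ^ i) \<le> A * X ^ m" if "i \<in> {..m}" for i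
      using coeff_term_bound[OF p x, of i m] that by (simp add: A_def X_def m_def)
  qed (use \<open>A \<ge> 1\<close> \<open>X \<ge> 1\<close> in simp)
  also have "\<dots> \<le> (max 1 (\<phi> (of_nat (Suc m))) * A * X ^ m) * max 1 (\<phi> (inverse (lead_coeff p)))"
    using \<open>A \<ge> 1\<close> \<open>X \<ge> 1\<close>
      mult_left_mono[of 1 "max 1 (\<phi> (inverse (lead_coeff p)))" "max 1 (\<phi> (of_nat (Suc m))) * A * X ^ m"]
    by (simp add: mult_ac)
  also have "\<dots> = coeff_size \<phi> p * X ^ m"
    by (simp add: coeff_size_def A_def m_def mult_ac)
  finally have "\<phi> (poly p x) \<le> coeff_size \<phi> p * X ^ m" .
  moreover have "1 * 1 \<le> coeff_size \<phi> p * X ^ m"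
    using coeff_size_ge_1[of \<phi> p] \<open>X \<ge> 1\<close> by (intro mult_mono one_le_power) auto
  ultimately show ?thesis by (simp add: X_def m_def)
qed

text \<open>Write \<open>c\<^sub>m x\<^sup>m = p(x) - \<Sum>\<^sub>i\<^sub><\<^sub>m c\<^sub>i x\<^sup>i\<close> and bound the right-hand side summand by summand.\<close>

lemma leading_power_bound:
  assumes p: "\<And>i. coeff p i \<in> alg" and x: "x \<in> alg" and m: "degree p \<ge> 1" and "\<phi> x \<ge> 1"
  shows "\<phi> x ^ degree p \<le> max 1 (\<phi> (inverse (lead_coeff p))) * max 1 (\<phi> (of_nat (Suc (degree p))))
      * max (\<phi> (poly p x)) ((\<Prod>i\<le>degree p. max 1 (\<phi> (coeff p i))) * \<phi> x ^ (degree p - 1))"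
    (is "_ \<le> ?W * ?\<Lambda> * ?B")
proof -
  define m where "m = degree p"
  define c where "c = lead_coeff p"
  define z where "z i = (if i = m then poly p x else - (coeff p i * x ^ i))" for i
  have c: "c \<in> alg" "c \<noteq> 0" using p m by (auto simp: c_def)
  have "poly p x = (\<Sum>i<m. coeff p i * x ^ i) + c * x ^ m"
    by (simp add: poly_altdef c_def m_def lessThan_Suc_atMost[symmetric])
  then have "(\<Sum>i\<le>m. z i) = c * x ^ m"
    by (simp add: z_def lessThan_Suc_atMost[symmetric] sum_negf)
  moreover have "z i \<in> alg" for i
    using p x subfield_alg by (auto simp: z_def intro: subfield_poly subfield_uminus subfield_mult subfield_power)
  moreover have "\<phi> (z i) \<le> ?B" if "i \<in> {..m}" for i
  proof (cases "i = m")
    case False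
    with that have "\<phi> (z i) \<le> (\<Prod>i\<le>m. max 1 (\<phi> (coeff p i))) * max 1 (\<phi> x) ^ (m - 1)"
      using coeff_term_bound[OF p x, of i "m - 1"] uminus subfield_alg p x
      by (simp add: z_def m_def subfield_mult subfield_power)
    then show ?thesis using \<open>\<phi> x \<ge> 1\<close> by (simp add: m_def)
  qed (simp add: z_def m_def)
  ultimately have "\<phi> (c * x ^ m) \<le> ?\<Lambda> * ?B"
    using sum_bound[of "{..m}" z ?B] nonneg by (force simp: m_def le_max_iff_disj)
  then have bound: "\<phi> c * \<phi> x ^ m \<le> ?\<Lambda> * ?B"
    using c x by (simp add: mult power subfield_power[OF subfield_alg])
  have "\<phi> x ^ m = \<phi> (inverse c) * (\<phi> c * \<phi> x ^ m)"
    using c by (simp add: inverse zero_iff)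
  also have "\<dots> \<le> ?W * (?\<Lambda> * ?B)"
    by (rule mult_mono[OF _ bound]) (auto simp: c_def nonneg)
  finally show ?thesis by (simp add: m_def mult.assoc)
qed

lemma large_argument_bound:
  assumes p: "\<And>i. coeff p i \<in> alg" and x: "x \<in> alg"
    and m: "degree p \<ge> 1" and large: "\<phi> x > coeff_size \<phi> p"
  shows "\<phi> x ^ degree p \<le> coeff_size \<phi> p * \<phi> (poly p x)"
proof -
  define m where "m = degree p"
  define A where "A = (\<Prod>i\<le>m. max 1 (\<phi> (coeff p i)))"
  define W\<Lambda> where "W\<Lambda> = max 1 (\<phi> (inverse (lead_coeff p))) * max 1 (\<phi> (of_nat (Suc m)))"
  have R: "coeff_size \<phi> p = W\<Lambda> * A" and "A \<ge> 1"
    by (auto simp: coeff_size_def W\<Lambda>_def A_def m_def intro: prod_ge_1)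
  have "\<phi> x \<ge> 1" using large coeff_size_ge_1[of \<phi> p] by simp
  then have lead: "\<phi> x ^ m \<le> W\<Lambda> * max (\<phi> (poly p x)) (A * \<phi> x ^ (m - 1))"
    using leading_power_bound[OF p x m] by (simp add: W\<Lambda>_def A_def m_def mult.assoc)
  have "\<not> \<phi> (poly p x) \<le> A * \<phi> x ^ (m - 1)"
  proof
    assume "\<phi> (poly p x) \<le> A * \<phi> x ^ (m - 1)"
    then have "\<phi> x * \<phi> x ^ (m - 1) \<le> coeff_size \<phi> p * \<phi> x ^ (m - 1)"
      using lead m by (simp add: R m_def mult_ac flip: power_Suc)
    then show False using large \<open>\<phi> x \<ge> 1\<close> by simp
  qed
  then have "\<phi> x ^ m \<le> W\<Lambda> * \<phi> (poly p x)" using lead by simp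
  also have "\<dots> \<le> W\<Lambda> * (A * \<phi> (poly p x))"
    using \<open>A \<ge> 1\<close> nonneg[of "poly p x"] mult_left_mono[of 1 A "\<phi> (poly p x)"]
    by (intro mult_left_mono) (auto simp: W\<Lambda>_def mult.commute)
  finally show ?thesis by (simp add: R m_def mult.assoc)
qed

lemma poly_lower_bound:
  assumes p: "\<And>i. coeff p i \<in> alg" and x: "x \<in> alg"
  shows "max 1 (\<phi> x) ^ degree p \<le> coeff_size \<phi> p ^ (degree p + 1) * max 1 (\<phi> (poly p x))"
proof -
  define m where "m = degree p"
  define R where "R = coeff_size \<phi> p"
  define X where "X = max 1 (\<phi> x)"
  have "R \<ge> 1" using coeff_size_ge_1 by (simp add: R_def)
  have R_le: "R ^ k \<le> R ^ (m + 1) * max 1 (\<phi> (poly p x))" if "k \<le> m + 1" for k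
  proof -
    have "R ^ k \<le> R ^ (m + 1)" using that \<open>R \<ge> 1\<close> by (rule power_increasing)
    also have "\<dots> \<le> R ^ (m + 1) * max 1 (\<phi> (poly p x))"
      using \<open>R \<ge> 1\<close> mult_left_mono[of 1 "max 1 (\<phi> (poly p x))" "R ^ (m + 1)"] by simp
    finally show ?thesis .
  qed
  consider "X \<le> R" | "m = 0" | "X > R" "m \<ge> 1" by linarith
  then show ?thesis
  proof cases
    case 1
    then have "X ^ m \<le> R ^ m" by (intro power_mono) (auto simp: X_def)
    then show ?thesis using R_le[of m] by (simp add: X_def R_def m_def)
  next
    case 2
    then show ?thesis using R_le[of 0] by (simp add: R_def m_def)
  next
    case 3
    then have "\<phi> x = X" using \<open>R \<ge> 1\<close> by (auto simp: X_def max_def split: if_splits)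
    then have "X ^ m \<le> R * \<phi> (poly p x)"
      using large_argument_bound[OF p x] 3 by (simp add: R_def m_def)
    also have "\<dots> \<le> R * max 1 (\<phi> (poly p x))"
      using \<open>R \<ge> 1\<close> by (intro mult_left_mono) auto
    also have "\<dots> \<le> R ^ (m + 1) * max 1 (\<phi> (poly p x))"
      using R_le[of 1] \<open>R \<ge> 1\<close> by (intro mult_right_mono) (auto intro: power_increasing[of 1 "m + 1" R, simplified])
    finally show ?thesis by (simp add: X_def R_def m_def)
  qed
qed

end

lemma (in std_place) logplus_poly_bounds:
  assumes p: "\<And>i. coeff p i \<in> alg" and x: "x \<in> alg"
  shows "logplus (\<phi> (poly p x)) \<le> degree p * logplus (\<phi> x) + log_coeff_size \<phi> p"
    and "degree p * logplus (\<phi> x) \<le> logplus (\<phi> (poly p x)) + (degree p + 1) * log_coeff_size \<phi> p"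
proof -
  have R: "coeff_size \<phi> p > 0" using coeff_size_ge_1[of \<phi> p] by simp
  have X: "max 1 t > 0" "max 1 t \<noteq> 0" for t :: real by auto
  have "ln (max 1 (\<phi> (poly p x))) \<le> ln (coeff_size \<phi> p * max 1 (\<phi> x) ^ degree p)"
    using poly_upper_bound[OF p x] by (intro ln_mono) auto
  then show "logplus (\<phi> (poly p x)) \<le> degree p * logplus (\<phi> x) + log_coeff_size \<phi> p"
    using R X by (simp add: logplus_eq ln_mult ln_realpow ln_coeff_size)
  have "ln (max 1 (\<phi> x) ^ degree p) \<le> ln (coeff_size \<phi> p ^ (degree p + 1) * max 1 (\<phi> (poly p x)))"
    using poly_lower_bound[OF p x] by (intro ln_mono) auto
  then show "degree p * logplus (\<phi> x) \<le> logplus (\<phi> (poly p x)) + (degree p + 1) * log_coeff_size \<phi> p"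
    using R X by (simp add: logplus_eq ln_mult ln_realpow ln_coeff_size algebra_simps)
qed

definition correspondence_defect :: "complex poly \<Rightarrow> complex poly \<Rightarrow> (complex \<Rightarrow> real) \<Rightarrow> real" where
  "correspondence_defect f g v = (degree f + 1) * log_coeff_size v f + (degree g + 1) * log_coeff_size v g"

lemma (in std_place) logplus_correspondence_bound:
  assumes f: "\<And>i. coeff f i \<in> alg" and g: "\<And>i. coeff g i \<in> alg"
    and xy: "x \<in> alg" "y \<in> alg" "poly g y = poly f x"
  shows "\<bar>degree f * logplus (\<phi> x) - degree g * logplus (\<phi> y)\<bar> \<le> correspondence_defect f g \<phi>"
proof -
  have le: "log_coeff_size \<phi> p \<le> (degree p + 1) * log_coeff_size \<phi> p" for p
    using log_coeff_size_nonneg[of \<phi> p] by (simp add: algebra_simps)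
  show ?thesis
    unfolding correspondence_defect_def abs_le_iff
    using logplus_poly_bounds[OF f xy(1)] logplus_poly_bounds[OF g xy(2), unfolded xy(3)]
      le[of f] le[of g] by linarith
qed

lemma MKbar_correspondence_bound:
  assumes v: "v \<in> MKbar K"
    and f: "\<And>i. coeff f i \<in> alg" and g: "\<And>i. coeff g i \<in> alg"
    and xy: "x \<in> alg" "y \<in> alg" "poly g y = poly f x"
  shows "\<bar>degree f * logplus (v x) - degree g * logplus (v y)\<bar> \<le> correspondence_defect f g v"
proof -
  from v obtain \<phi> where "std_absval \<phi>" and v: "v = (\<lambda>x. \<phi> x powr (real (ldeg K \<phi>) / real (deg K)))"
    by (auto simp: MKbar_def norm_av_def)
  then interpret std_place \<phi> by unfold_locales
  define c where "c = real (ldeg K \<phi>) / real (deg K)"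
  have "c \<ge> 0" by (simp add: c_def)
  have "logplus (v z) = c * logplus (\<phi> z)" for z
    using \<open>c \<ge> 0\<close> nonneg by (simp add: v c_def[symmetric] logplus_powr)
  then have "\<bar>degree f * logplus (v x) - degree g * logplus (v y)\<bar>
      = \<bar>c * (degree f * logplus (\<phi> x) - degree g * logplus (\<phi> y))\<bar>"
    by (simp add: algebra_simps)
  also have "\<dots> = c * \<bar>degree f * logplus (\<phi> x) - degree g * logplus (\<phi> y)\<bar>"
    using \<open>c \<ge> 0\<close> by (simp add: abs_mult)
  also have "\<dots> \<le> c * correspondence_defect f g \<phi>"
    using logplus_correspondence_bound[OF f g xy] \<open>c \<ge> 0\<close> by (rule mult_left_mono)
  also have "\<dots> = correspondence_defect f g v"
    using \<open>c \<ge> 0\<close> nonneg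
    by (simp add: v c_def[symmetric] correspondence_defect_def log_coeff_size_powr algebra_simps)
  finally show ?thesis .
qed

section \<open>Sequences with geometrically decreasing increments\<close>

lemma scaled_increment_bound:
  fixes d e C x y :: real
  assumes "d > 0" "e \<ge> 0" and "\<bar>d * x - e * y\<bar> \<le> C"
  shows "\<bar>(e / d) ^ Suc n * y - (e / d) ^ n * x\<bar> \<le> (e / d) ^ n * (C / d)"
proof -
  have "(e / d) ^ Suc n * y - (e / d) ^ n * x = - ((e / d) ^ n * ((d * x - e * y) / d))"
    using assms(1) by (simp add: field_simps)
  then show ?thesis
    using assms by (simp add: abs_mult divide_right_mono mult_left_mono)
qed

lemma geometric_increments_convergent:
  fixes a :: "nat \<Rightarrow> real"
  assumes r: "0 \<le> r" "r < 1" and step: "\<And>n. \<bar>a (Suc n) - a n\<bar> \<le> r ^ n * B"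
  shows "convergent a" and "\<bar>a n - a 0\<bar> \<le> B / (1 - r)"
proof -
  define d where "d k = a (Suc k) - a k" for k
  have "B \<ge> 0" using step[of 0] by simp
  have geom: "summable (\<lambda>k. r ^ k * B)"
    using r by (intro summable_mult2 summable_geometric) simp
  have "norm (d k) \<le> r ^ k * B" for k using step by (simp add: d_def)
  then have "summable d" using summable_comparison_test'[OF geom] by blast
  have telescope: "a n = a 0 + (\<Sum>k<n. d k)" for n
    by (simp add: d_def sum_lessThan_telescope)
  have "(\<lambda>n. a 0 + (\<Sum>k<n. d k)) \<longlonglongrightarrow> a 0 + suminf d"
    using summable_LIMSEQ[OF \<open>summable d\<close>] by (rule tendsto_add[OF tendsto_const])
  then show "convergent a"
    unfolding telescope[symmetric] by (rule convergentI)
  have "\<bar>\<Sum>k<n. d k\<bar> \<le> (\<Sum>k<n. \<bar>d k\<bar>)" by (rule sum_abs)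
  also have "\<dots> \<le> (\<Sum>k<n. r ^ k * B)"
    using step by (intro sum_mono) (simp add: d_def)
  also have "\<dots> \<le> (\<Sum>k. r ^ k * B)"
    using r \<open>B \<ge> 0\<close> by (intro sum_le_suminf[OF geom]) auto
  also have "\<dots> = B / (1 - r)"
    using r by (simp add: suminf_mult2[OF summable_geometric, symmetric] suminf_geometric)
  finally show "\<bar>a n - a 0\<bar> \<le> B / (1 - r)" using telescope[of n] by simp
qed

lemma
  fixes a :: "nat \<Rightarrow> 'a \<Rightarrow> real"
  assumes r: "0 \<le> r" "r < 1"
    and a: "\<And>n. integrable M (a n)" and B: "integrable M B"
    and step: "\<And>n x. x \<in> space M \<Longrightarrow> \<bar>a (Suc n) x - a n x\<bar> \<le> r ^ n * B x"
  shows borel_measurable_lim_geometric_increments: "(\<lambda>x. lim (\<lambda>n. a n x)) \<in> borel_measurable M"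
    and integrable_lim_geometric_increments: "integrable M (\<lambda>x. lim (\<lambda>n. a n x))"
    and integral_tendsto_lim_geometric_increments:
      "(\<lambda>n. \<integral>x. a n x \<partial>M) \<longlonglongrightarrow> (\<integral>x. lim (\<lambda>n. a n x) \<partial>M)"
proof -
  have lim: "(\<lambda>n. a n x) \<longlonglongrightarrow> lim (\<lambda>n. a n x)" if "x \<in> space M" for x
    using geometric_increments_convergent(1)[OF r step[OF that]] by (simp add: convergent_LIMSEQ_iff)
  show meas: "(\<lambda>x. lim (\<lambda>n. a n x)) \<in> borel_measurable M"
    using borel_measurable_LIMSEQ_real[OF lim borel_measurable_integrable[OF a]] .
  have bound: "norm (a n x) \<le> \<bar>a 0 x\<bar> + B x / (1 - r)" if "x \<in> space M" for n x
    using geometric_increments_convergent(2)[OF r step[OF that], of n] by simp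
  have "integrable M (\<lambda>x. \<bar>a 0 x\<bar> + B x / (1 - r))"
    using a B by (intro Bochner_Integration.integrable_add integrable_abs integrable_divide)
  note dominated = meas _ this AE_I2[OF lim] AE_I2[OF bound]
  show "integrable M (\<lambda>x. lim (\<lambda>n. a n x))"
    using integrable_dominated_convergence[OF dominated] a by auto
  show "(\<lambda>n. \<integral>x. a n x \<partial>M) \<longlonglongrightarrow> (\<integral>x. lim (\<lambda>n. a n x) \<partial>M)"
    using integral_dominated_convergence[OF dominated] a by auto
qed

section \<open>Measurability on the space of places\<close>

lemma finite_disjoint_family_bounded_below:
  fixes h :: "'a \<Rightarrow> real" and \<F> :: "'a set set"
  assumes disjoint: "\<And>F G. F \<in> \<F> \<Longrightarrow> G \<in> \<F> \<Longrightarrow> F \<noteq> G \<Longrightarrow> F \<inter> G = {}"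
    and sets: "\<F> \<subseteq> sets M"
    and measure: "\<And>F. F \<in> \<F> \<Longrightarrow> emeasure M F \<ge> ennreal \<delta>" and "\<delta> > 0"
    and lower: "\<And>F x. F \<in> \<F> \<Longrightarrow> x \<in> F \<Longrightarrow> \<epsilon> \<le> h x" and "\<epsilon> > 0"
    and integral: "(\<integral>\<^sup>+x. ennreal (h x) \<partial>M) \<noteq> \<infinity>"
  shows "finite \<F>"
proof -
  obtain C where C: "(\<integral>\<^sup>+x. ennreal (h x) \<partial>M) = ennreal C" "C \<ge> 0"
    using integral by (cases "\<integral>\<^sup>+x. ennreal (h x) \<partial>M" rule: ennreal_cases) auto
  have "card S \<le> nat \<lceil>C / (\<epsilon> * \<delta>)\<rceil>" if S: "S \<subseteq> \<F>" "finite S" for S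
  proof -
    have "ennreal (real (card S) * (\<epsilon> * \<delta>)) = (\<Sum>F\<in>S. ennreal \<epsilon> * ennreal \<delta>)"
      using \<open>\<epsilon> > 0\<close> \<open>\<delta> > 0\<close> by (simp add: ennreal_mult' ennreal_of_nat_eq_real_of_nat)
    also have "\<dots> \<le> (\<Sum>F\<in>S. ennreal \<epsilon> * emeasure M F)"
      using measure S(1) by (intro sum_mono mult_left_mono) auto
    also have "\<dots> = ennreal \<epsilon> * emeasure M (\<Union>S)"
      using S sets disjoint
      by (simp add: sum_distrib_left[symmetric] sum_emeasure[of "\<lambda>F. F", simplified]
          disjoint_family_on_def subset_eq)
    also have "\<dots> = (\<integral>\<^sup>+x. ennreal \<epsilon> * indicator (\<Union>S) x \<partial>M)"
      using S sets by (intro nn_integral_cmult_indicator[symmetric] sets.finite_Union) auto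
    also have "\<dots> \<le> (\<integral>\<^sup>+x. ennreal (h x) \<partial>M)"
      using S(1) lower by (intro nn_integral_mono) (auto simp: indicator_def intro: ennreal_leI)
    finally have "real (card S) * (\<epsilon> * \<delta>) \<le> C"
      using C by (simp add: ennreal_le_iff)
    then have "real (card S) \<le> C / (\<epsilon> * \<delta>)"
      using \<open>\<epsilon> > 0\<close> \<open>\<delta> > 0\<close> by (simp add: field_simps)
    then have "\<lceil>real (card S)\<rceil> \<le> \<lceil>C / (\<epsilon> * \<delta>)\<rceil>" by (rule ceiling_mono)
    then show ?thesis using nat_mono by fastforce
  qed
  then show ?thesis using finite_if_finite_subsets_card_bdd by blast
qed

lemma measurable_constant_on_countable_cover:
  fixes f :: "'a \<Rightarrow> 'b::topological_space"
  assumes "countable \<F>" "\<F> \<subseteq> sets M" "space M \<subseteq> \<Union>\<F>"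
    and const: "\<And>F x y. F \<in> \<F> \<Longrightarrow> x \<in> F \<Longrightarrow> y \<in> F \<Longrightarrow> f x = f y"
  shows "f \<in> borel_measurable M"
proof (rule measurableI)
  fix A :: "'b set"
  have "f -` A \<inter> space M = \<Union>{F \<in> \<F>. \<exists>x\<in>F. f x \<in> A}"
  proof
    show "f -` A \<inter> space M \<subseteq> \<Union>{F \<in> \<F>. \<exists>x\<in>F. f x \<in> A}" using assms(3) by blast
    show "\<Union>{F \<in> \<F>. \<exists>x\<in>F. f x \<in> A} \<subseteq> f -` A \<inter> space M"
    proof clarify
      fix x F y assume "F \<in> \<F>" "x \<in> F" "y \<in> F" "f y \<in> A"
      then show "x \<in> f -` A \<inter> space M"
        using const[of F x y] sets.sets_into_space[of F M] assms(2) by auto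
    qed
  qed
  moreover have "{F \<in> \<F>. \<exists>x\<in>F. f x \<in> A} \<subseteq> sets M" using assms(2) by auto
  ultimately show "f -` A \<inter> space M \<in> sets M"
    using assms(1) by (simp add: sets.countable_Union)
qed auto

definition fibre :: "(complex \<Rightarrow> real) set \<Rightarrow> complex set \<Rightarrow> (complex \<Rightarrow> real) \<Rightarrow> (complex \<Rightarrow> real) set" where
  "fibre V L v = {w \<in> V. \<forall>x\<in>L. w x = v x}"

lemma fibre_eq: "w \<in> fibre V L v \<Longrightarrow> fibre V L w = fibre V L v"
  by (auto simp: fibre_def)

locale MKbar_measure =
  fixes K :: "complex set" and M :: "(complex \<Rightarrow> real) measure"
  assumes K: "number_field K"
    and space: "space M = MKbar K"
    and fibres: "\<forall>L \<phi>. number_field L \<and> K \<subseteq> L \<and> std_absval \<phi> \<longrightarrow>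
        {v \<in> space M. \<forall>x\<in>L. v x = norm_av K \<phi> x} \<in> sets M \<and>
        emeasure M {v \<in> space M. \<forall>x\<in>L. v x = norm_av K \<phi> x} =
          ennreal ((real (ldeg L \<phi>) / real (ldeg K \<phi>)) / (real (deg L) / real (deg K)))"
    and height: "\<forall>\<alpha>\<in>alg. ennreal (weil_height \<alpha>) = (\<integral>\<^sup>+ v. ennreal (logplus (v \<alpha>)) \<partial>M)"
begin

definition places_over :: "nat \<Rightarrow> (complex \<Rightarrow> real) set" where
  "places_over p = {v \<in> space M. \<exists>\<phi>. std_absval \<phi> \<and> v = norm_av K \<phi> \<and> (\<forall>q. \<phi> (of_rat q) = absval_Q p q)}"

lemma space_subset_places_over: "space M \<subseteq> (\<Union>p\<in>{p. p = 0 \<or> prime p}. places_over p)"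
proof
  fix v assume v: "v \<in> space M"
  then obtain \<phi> where \<phi>: "std_absval \<phi>" "v = norm_av K \<phi>" by (auto simp: space MKbar_def)
  then interpret std_place \<phi> by unfold_locales
  obtain p where "p = 0 \<or> prime p" "\<And>q. \<phi> (of_rat q) = absval_Q p q"
    using restrict_to_rat by metis
  then show "v \<in> (\<Union>p\<in>{p. p = 0 \<or> prime p}. places_over p)"
    using v \<phi> by (auto simp: places_over_def)
qed

context
  fixes L assumes L: "number_field L" "K \<subseteq> L"
begin

lemma fibre_in_sets: "v \<in> space M \<Longrightarrow> fibre (space M) L v \<in> sets M"
  using fibres L by (auto simp: space MKbar_def fibre_def)

lemma emeasure_fibre_ge: "v \<in> space M \<Longrightarrow> emeasure M (fibre (space M) L v) \<ge> 1 / real (deg L)"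
proof -
  assume "v \<in> space M"
  then obtain \<phi> where "std_absval \<phi>" "v = norm_av K \<phi>" by (auto simp: space MKbar_def)
  then have em: "emeasure M (fibre (space M) L v)
      = ennreal ((real (ldeg L \<phi>) / real (ldeg K \<phi>)) / (real (deg L) / real (deg K)))"
    using fibres L by (simp add: fibre_def)
  have "real (ldeg L \<phi>) \<ge> 1" "real (ldeg K \<phi>) \<ge> 1" "real (ldeg K \<phi>) \<le> real (deg K)"
    using ldeg_pos[OF L(1)] ldeg_pos[OF K] ldeg_le_deg[OF K] by auto
  moreover have "real (deg L) \<ge> 1" using deg_pos[OF L(1)] by simp
  ultimately have "real (ldeg K \<phi>) * 1 \<le> real (deg K) * real (ldeg L \<phi>)"
    by (intro mult_mono) auto
  then have "1 / real (deg L) \<le> (real (ldeg L \<phi>) / real (ldeg K \<phi>)) / (real (deg L) / real (deg K))"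
    using \<open>real (ldeg K \<phi>) \<ge> 1\<close> \<open>real (deg L) \<ge> 1\<close> by (simp add: field_simps)
  then show ?thesis unfolding em by (rule ennreal_leI)
qed

lemma finite_fibres_over:
  assumes p: "p = 0 \<or> prime p"
  shows "finite (fibre (space M) L ` places_over p)"
proof -
  obtain q where q: "absval_Q p q > 1" using absval_Q_gt_1[OF p] .
  define \<epsilon> where "\<epsilon> = ln (absval_Q p q) / real (deg K)"
  have "\<epsilon> > 0" using q deg_pos[OF K] by (simp add: \<epsilon>_def)
  have qK: "of_rat q \<in> K" using K by (simp add: number_field_def subfield_of_rat)
  have lower: "\<epsilon> \<le> logplus (v (of_rat q))" if "v \<in> places_over p" for v
  proof -
    from that obtain \<phi> where "std_absval \<phi>" "v = norm_av K \<phi>" "\<phi> (of_rat q) = absval_Q p q"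
      by (auto simp: places_over_def)
    then have "logplus (v (of_rat q)) = real (ldeg K \<phi>) / real (deg K) * ln (absval_Q p q)"
      using q logplus_powr[of "absval_Q p q" "real (ldeg K \<phi>) / real (deg K)"]
      by (simp add: norm_av_def logplus_def)
    moreover have "real (ldeg K \<phi>) \<ge> 1" using ldeg_pos[OF K] by simp
    ultimately show ?thesis
      using q deg_pos[OF K] by (simp add: \<epsilon>_def divide_right_mono mult_right_mono)
  qed
  show ?thesis
  proof (rule finite_disjoint_family_bounded_below)
    show "fibre (space M) L ` places_over p \<subseteq> sets M"
      using fibre_in_sets by (auto simp: places_over_def)
    show "F \<inter> G = {}" if "F \<in> fibre (space M) L ` places_over p" "G \<in> fibre (space M) L ` places_over p"
      "F \<noteq> G" for F G
      using that fibre_eq by blast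
    show "emeasure M F \<ge> ennreal (1 / real (deg L))" if "F \<in> fibre (space M) L ` places_over p" for F
      using that emeasure_fibre_ge by (auto simp: places_over_def)
    show "\<epsilon> \<le> logplus (w (of_rat q))" if "F \<in> fibre (space M) L ` places_over p" "w \<in> F" for F w
      using that lower qK L(2) by (auto simp: fibre_def)
    have "of_rat q \<in> alg" using qK K by (auto simp: number_field_def)
    then show "(\<integral>\<^sup>+ w. ennreal (logplus (w (of_rat q))) \<partial>M) \<noteq> \<infinity>"
      by (simp flip: height[rule_format])
  qed (use \<open>\<epsilon> > 0\<close> deg_pos[OF L(1)] in auto)
qed

lemma countable_fibres: "countable (fibre (space M) L ` space M)"
proof (rule countable_subset)
  show "fibre (space M) L ` space M \<subseteq> (\<Union>p\<in>{p. p = 0 \<or> prime p}. fibre (space M) L ` places_over p)"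
    using space_subset_places_over by blast
qed (auto intro: countable_finite finite_fibres_over)

lemma measurable_eval_in:
  assumes "\<alpha> \<in> L"
  shows "(\<lambda>v. v \<alpha>) \<in> borel_measurable M"
proof (rule measurable_constant_on_countable_cover[OF countable_fibres])
  show "fibre (space M) L ` space M \<subseteq> sets M" using fibre_in_sets by blast
  show "space M \<subseteq> \<Union> (fibre (space M) L ` space M)" by (auto simp: fibre_def)
qed (use assms in \<open>auto simp: fibre_def\<close>)

end

lemma measurable_eval:
  assumes "\<alpha> \<in> alg"
  shows "(\<lambda>v. v \<alpha>) \<in> borel_measurable M"
proof -
  obtain L where "number_field L" "K \<subseteq> L" "\<alpha> \<in> L" using number_field_extend[OF K assms] .
  then show ?thesis by (rule measurable_eval_in)
qed

lemma integrable_logplus_eval: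
  assumes "\<alpha> \<in> alg"
  shows "integrable M (\<lambda>v. logplus (v \<alpha>))"
proof (rule integrableI_nonneg)
  show "(\<lambda>v. logplus (v \<alpha>)) \<in> borel_measurable M"
    unfolding logplus_eq using measurable_eval[OF assms] by measurable
  show "(\<integral>\<^sup>+v. ennreal (logplus (v \<alpha>)) \<partial>M) < \<infinity>"
    using assms by (simp flip: height[rule_format])
qed (simp add: logplus_nonneg)

lemma integral_logplus_eval:
  assumes "\<alpha> \<in> alg"
  shows "(\<integral>v. logplus (v \<alpha>) \<partial>M) = weil_height \<alpha>"
proof -
  have "ennreal (\<integral>v. logplus (v \<alpha>) \<partial>M) = ennreal (weil_height \<alpha>)"
    using assms integrable_logplus_eval[OF assms] height
    by (subst nn_integral_eq_integral[symmetric]) (auto simp: logplus_nonneg)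
  then show ?thesis
    using weil_height_nonneg by (simp add: ennreal_inj integral_nonneg_AE logplus_nonneg)
qed

lemma integrable_log_coeff_size:
  assumes "\<And>i. coeff p i \<in> alg"
  shows "integrable M (\<lambda>v. log_coeff_size v p)"
  unfolding log_coeff_size_def using assms subfield_alg
  by (intro Bochner_Integration.integrable_add Bochner_Integration.integrable_sum
      integrable_logplus_eval subfield_of_nat subfield_inverse) auto

end

section \<open>The canonical height of a path\<close>

lemma path_proj_shift_power: "path_proj ((shift ^^ n) P) = P n"
proof -
  have "(shift ^^ n) P = (\<lambda>k. P (k + n))" by (induction n) (auto simp: shift_def)
  then show ?thesis by (simp add: path_proj_def)
qed

lemma (in MKbar_measure) escape_rate_limit:
  assumes f: "\<And>i. coeff f i \<in> alg" and g: "\<And>i. coeff g i \<in> alg"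
    and deg: "degree g < degree f" and path: "is_path f g P" and alg: "\<forall>n. P n \<in> alg"
  shows "GC f g P \<in> borel_measurable M" and "integrable M (GC f g P)"
    and "AE v in M. GC f g P v \<ge> 0"
    and "(\<lambda>n. (real (degree g) / real (degree f)) ^ n * weil_height (P n)) \<longlonglongrightarrow> (\<integral>v. GC f g P v \<partial>M)"
proof -
  define r where "r = real (degree g) / real (degree f)"
  define a where "a n v = r ^ n * logplus (v (P n))" for n v
  define B where "B v = correspondence_defect f g v / real (degree f)" for v
  have r: "0 \<le> r" "r < 1" using deg by (auto simp: r_def)
  have GC: "GC f g P = (\<lambda>v. lim (\<lambda>n. a n v))"
    by (simp add: fun_eq_iff GC_def a_def r_def path_proj_shift_power)
  have a: "integrable M (\<lambda>v. a n v)" "(\<integral>v. a n v \<partial>M) = r ^ n * weil_height (P n)" for n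
    using alg by (auto simp: a_def integral_logplus_eval integrable_logplus_eval)
  have B: "integrable M B"
    unfolding B_def correspondence_defect_def
    by (intro integrable_divide Bochner_Integration.integrable_add integrable_mult_right
        integrable_log_coeff_size f g)
  have step: "\<bar>a (Suc n) v - a n v\<bar> \<le> r ^ n * B v" if "v \<in> space M" for n v
    using MKbar_correspondence_bound[of v K f g "P n" "P (Suc n)"] that space f g alg path deg
    unfolding a_def B_def r_def
    by (intro scaled_increment_bound) (auto simp: is_path_def)
  show "GC f g P \<in> borel_measurable M" and "integrable M (GC f g P)"
    and "(\<lambda>n. r ^ n * weil_height (P n)) \<longlonglongrightarrow> (\<integral>v. GC f g P v \<partial>M)"
    using borel_measurable_lim_geometric_increments[of r M a B, OF r a(1) B step]
      integrable_lim_geometric_increments[of r M a B, OF r a(1) B step]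
      integral_tendsto_lim_geometric_increments[of r M a B, OF r a(1) B step]
    unfolding GC a(2) by simp_all
  show "AE v in M. GC f g P v \<ge> 0"
  proof (rule AE_I2)
    fix v assume "v \<in> space M"
    then have "(\<lambda>n. a n v) \<longlonglongrightarrow> lim (\<lambda>n. a n v)"
      using geometric_increments_convergent(1)[OF r step] by (simp add: convergent_LIMSEQ_iff)
    moreover have "a n v \<ge> 0" for n using r by (simp add: a_def logplus_nonneg)
    ultimately show "GC f g P v \<ge> 0" unfolding GC by (simp add: LIMSEQ_le_const)
  qed
qed

theorem proposition4p2:
  fixes K :: "complex set" and f g :: "complex poly" and P :: "nat \<Rightarrow> complex"
    and M :: "(complex \<Rightarrow> real) measure"
  assumes K: "number_field K"
    and fK: "\<forall>i. coeff f i \<in> K" and gK: "\<forall>i. coeff g i \<in> K"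
    and deg: "degree f > degree g" "degree g \<ge> 1"
    and path: "is_path f g P" and alg: "\<forall>n. P n \<in> alg"
    and space: "space M = MKbar K"
    and fibres: "\<forall>L \<phi>. number_field L \<and> K \<subseteq> L \<and> std_absval \<phi> \<longrightarrow>
        {v \<in> space M. \<forall>x\<in>L. v x = norm_av K \<phi> x} \<in> sets M \<and>
        emeasure M {v \<in> space M. \<forall>x\<in>L. v x = norm_av K \<phi> x} =
          ennreal ((real (ldeg L \<phi>) / real (ldeg K \<phi>)) / (real (deg L) / real (deg K)))"
    and height: "\<forall>\<alpha>\<in>alg. ennreal (weil_height \<alpha>) = (\<integral>\<^sup>+ v. ennreal (logplus (v \<alpha>)) \<partial>M)"
  shows "GC f g P \<in> borel_measurable M
    \<and> convergent (\<lambda>n. (real (degree g) / real (degree f)) ^ n * weil_height (path_proj ((shift ^^ n) P)))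
    \<and> ennreal (lim (\<lambda>n. (real (degree g) / real (degree f)) ^ n * weil_height (path_proj ((shift ^^ n) P))))
        = (\<integral>\<^sup>+ v. ennreal (GC f g P v) \<partial>M)"
proof -
  interpret MKbar_measure K M using K space fibres height by unfold_locales
  have "\<And>i. coeff f i \<in> alg" "\<And>i. coeff g i \<in> alg"
    using fK gK K by (auto simp: number_field_def)
  note limit = escape_rate_limit[OF this deg(1) path alg]
  have seq: "(\<lambda>n. (real (degree g) / real (degree f)) ^ n * weil_height (path_proj ((shift ^^ n) P)))
      = (\<lambda>n. (real (degree g) / real (degree f)) ^ n * weil_height (P n))"
    by (simp add: path_proj_shift_power)
  show ?thesis
    unfolding seq using limit
    by (auto simp: convergentI limI nn_integral_eq_integral)
qed

end
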